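(* Let $G$ be an arbitrary graph and let $B$ be a bipartite graph that is dispersable. Then $\mathrm{mbt}(G\Box B)\leq \mathrm{mbt}(G)+\Delta(B)$.
   Context: A book embedding of a graph $G$ consists of a linear ordering of $V(G)$ (the vertices placed on the spine) together with an assignment of each edge to one of a set of pages such that no two edges on the same page cross, i.e. there are no two edges $uv$, $xy$ on the same page with $u<x<v<y$ in the ordering. A book embedding is matching if on every page each vertex is incident with at most one edge of that page. The matching book thickness $\mathrm{mbt}(G)$ is the minimum number of pages over all matching book embeddings of $G$. $\Delta(G)$ denotes the maximum degree of $G$. A graph $G$ is dispersable if $\mathrm{mbt}(G)=\Delta(G)$. The Cartesian product $G\Box B$ has vertex set $V(G)\times V(B)$, with $(u_1,v_1)$ adjacent to $(u_2,v_2)$ iff either $u_1=u_2$ and $v_1v_2\in E(B)$, or $v_1=v_2$ and $u_1u_2\in E(G)$. *)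

theory Defs
  imports Main
begin

type_synonym 'a graph = "'a set \<times> 'a set set"

definition verts :: "'a graph \<Rightarrow> 'a set" where "verts G = fst G"
definition edges :: "'a graph \<Rightarrow> 'a set set" where "edges G = snd G"

definition graph :: "'a graph \<Rightarrow> bool" where
  "graph G \<longleftrightarrow> finite (verts G) \<and> (\<forall>e\<in>edges G. e \<subseteq> verts G \<and> card e = 2)"

definition degree :: "'a graph \<Rightarrow> 'a \<Rightarrow> nat" where
  "degree G v = card {e \<in> edges G. v \<in> e}"

definition max_degree :: "'a graph \<Rightarrow> nat" where
  "max_degree G = Max (insert 0 (degree G ` verts G))"

text \<open>A linear ordering of the vertices on the spine is given by an injective
  position map into nat. Two edges cross if their endpoints interleave.\<close>
definition crosses :: "('a \<Rightarrow> nat) \<Rightarrow> 'a set \<Rightarrow> 'a set \<Rightarrow> bool" where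
  "crosses pos e f \<longleftrightarrow> (\<exists>u v x y. e = {u, v} \<and> f = {x, y} \<and>
      pos u < pos x \<and> pos x < pos v \<and> pos v < pos y)"

definition matching_book_embedding ::
  "'a graph \<Rightarrow> nat \<Rightarrow> ('a \<Rightarrow> nat) \<Rightarrow> ('a set \<Rightarrow> nat) \<Rightarrow> bool" where
  "matching_book_embedding G k pos page \<longleftrightarrow>
     inj_on pos (verts G) \<and>
     (\<forall>e\<in>edges G. page e < k) \<and>
     (\<forall>e\<in>edges G. \<forall>f\<in>edges G. page e = page f \<longrightarrow> \<not> crosses pos e f) \<and>
     (\<forall>e\<in>edges G. \<forall>f\<in>edges G. e \<noteq> f \<and> page e = page f \<longrightarrow> e \<inter> f = {})"

definition mbt :: "'a graph \<Rightarrow> nat" where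
  "mbt G = (LEAST k. \<exists>pos page. matching_book_embedding G k pos page)"

definition dispersable :: "'a graph \<Rightarrow> bool" where
  "dispersable G \<longleftrightarrow> mbt G = max_degree G"

definition bipartite :: "'a graph \<Rightarrow> bool" where
  "bipartite G \<longleftrightarrow> (\<exists>A \<subseteq> verts G. \<forall>e\<in>edges G. card (e \<inter> A) = 1)"

definition cart_prod :: "'a graph \<Rightarrow> 'b graph \<Rightarrow> ('a \<times> 'b) graph" where
  "cart_prod G B =
     (verts G \<times> verts B,
      {{(u, v1), (u, v2)} | u v1 v2. u \<in> verts G \<and> {v1, v2} \<in> edges B} \<union>
      {{(u1, v), (u2, v)} | u1 u2 v. v \<in> verts B \<and> {u1, u2} \<in> edges G})"

end

theory Submission
  imports Defs
begin

text \<open>Lay the copies of G out along the spine block by block, the blocks ordered as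
  the vertices of B in a matching book embedding of B, and the copy in block v
  ordered as in an embedding of G, reversed when v lies in the colour class A of B.
  An edge inside a copy keeps the page of its G-edge; an edge between copies gets a
  fresh page indexed by its B-edge. Blocks are intervals, so edges of different
  copies cannot cross, and two copies of the same B-edge are nested: its ends have
  opposite colours, so the two blocks traverse G in opposite directions. Hence
  mbt (G \<box> B) \<le> mbt G + mbt B, and mbt B = \<Delta>(B) by dispersability.\<close>

definition page_compatible :: "('a \<Rightarrow> nat) \<Rightarrow> 'a set \<Rightarrow> 'a set \<Rightarrow> bool" where
  "page_compatible pos e f \<longleftrightarrow> \<not> crosses pos e f \<and> (e \<noteq> f \<longrightarrow> e \<inter> f = {})"

lemma matching_book_embedding_iff:
  "matching_book_embedding G k pos page \<longleftrightarrow>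
     inj_on pos (verts G) \<and> (\<forall>e\<in>edges G. page e < k) \<and>
     (\<forall>e\<in>edges G. \<forall>f\<in>edges G. page e = page f \<longrightarrow> page_compatible pos e f)"
  unfolding matching_book_embedding_def page_compatible_def
  by (simp add: imp_conjR ball_conj_distrib) meson

lemma not_crosses_self: "\<not> crosses pos e e"
  unfolding crosses_def by (auto simp: doubleton_eq_iff)

lemma crosses_between: "crosses pos e f \<Longrightarrow> \<exists>a\<in>e. \<exists>b\<in>e. \<exists>c\<in>f. pos a < pos c \<and> pos c < pos b"
  unfolding crosses_def by blast

lemma crosses_image_mono:
  assumes "crosses pos e f"
    and "\<And>a b. a \<in> e \<union> f \<Longrightarrow> b \<in> e \<union> f \<Longrightarrow> pos a < pos b \<Longrightarrow> pos' (h a) < pos' (h b)"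
  shows "crosses pos' (h ` e) (h ` f)"
proof -
  obtain u v x y where "e = {u, v}" "f = {x, y}" "pos u < pos x" "pos x < pos v" "pos v < pos y"
    using assms(1) unfolding crosses_def by blast
  with assms(2) have "h ` e = {h u, h v}" "h ` f = {h x, h y}"
    "pos' (h u) < pos' (h x)" "pos' (h x) < pos' (h v)" "pos' (h v) < pos' (h y)" by auto
  then show ?thesis unfolding crosses_def by blast
qed

lemma crosses_image_antimono:
  assumes "crosses pos e f"
    and "\<And>a b. a \<in> e \<union> f \<Longrightarrow> b \<in> e \<union> f \<Longrightarrow> pos a < pos b \<Longrightarrow> pos' (h b) < pos' (h a)"
  shows "crosses pos' (h ` f) (h ` e)"
proof -
  obtain u v x y where "e = {u, v}" "f = {x, y}" "pos u < pos x" "pos x < pos v" "pos v < pos y"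
    using assms(1) unfolding crosses_def by blast
  with assms(2) have "h ` f = {h y, h x}" "h ` e = {h v, h u}"
    "pos' (h y) < pos' (h v)" "pos' (h v) < pos' (h x)" "pos' (h x) < pos' (h u)" by auto
  then show ?thesis unfolding crosses_def by blast
qed

lemma edge_endpoints:
  assumes "graph G" and "{u, v} \<in> edges G"
  shows "u \<noteq> v" and "u \<in> verts G" and "v \<in> verts G"
proof -
  have "card {u, v} = 2" and "{u, v} \<subseteq> verts G" using assms unfolding graph_def by auto
  then show "u \<noteq> v" "u \<in> verts G" "v \<in> verts G" by (auto simp: card_insert_if split: if_splits)
qed

lemma bipartite_edge_sides:
  assumes "u \<noteq> v" and "card ({u, v} \<inter> A) = 1"
  shows "u \<in> A \<longleftrightarrow> v \<notin> A"
  using assms by (cases "u \<in> A"; cases "v \<in> A") (auto simp: Int_insert_left)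

lemma ex_matching_book_embedding:
  assumes "graph G" shows "\<exists>k pos page. matching_book_embedding G k pos page"
proof -
  have fin_V: "finite (verts G)" using assms by (simp add: graph_def)
  moreover have "edges G \<subseteq> Pow (verts G)" using assms by (auto simp: graph_def)
  ultimately have fin_E: "finite (edges G)" by (meson finite_Pow_iff finite_subset)
  obtain pos :: "'a \<Rightarrow> nat" where pos: "inj_on pos (verts G)"
    using ex_bij_betw_finite_nat[OF fin_V] bij_betw_imp_inj_on by blast
  obtain page where page: "bij_betw page (edges G) {0..<card (edges G)}"
    using ex_bij_betw_finite_nat[OF fin_E] by blast
  have "matching_book_embedding G (card (edges G)) pos page"
    unfolding matching_book_embedding_iff page_compatible_def
    using pos page bij_betw_imp_inj_on[OF page] not_crosses_self
    by (auto dest: bij_betwE inj_onD)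
  then show ?thesis by blast
qed

lemma mbt_attained:
  assumes "graph G" shows "\<exists>pos page. matching_book_embedding G (mbt G) pos page"
  unfolding mbt_def using ex_matching_book_embedding[OF assms] by (rule LeastI_ex)

lemma mbt_le:
  assumes "matching_book_embedding G k pos page" shows "mbt G \<le> k"
  unfolding mbt_def using assms by (blast intro: Least_le)

definition product_spine :: "('a \<Rightarrow> nat) \<Rightarrow> ('b \<Rightarrow> nat) \<Rightarrow> 'b set \<Rightarrow> nat \<Rightarrow> 'a \<times> 'b \<Rightarrow> nat" where
  "product_spine pG pB A M a =
     pB (snd a) * M + (if snd a \<in> A then M - 1 - pG (fst a) else pG (fst a))"

definition product_page ::
    "nat \<Rightarrow> ('a set \<Rightarrow> nat) \<Rightarrow> ('b set \<Rightarrow> nat) \<Rightarrow> ('a \<times> 'b) set \<Rightarrow> nat" where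
  "product_page k qG qB e = (if card (fst ` e) = 1 then k + qB (snd ` e) else qG (fst ` e))"

lemma product_spine_div:
  "pG (fst a) < M \<Longrightarrow> product_spine pG pB A M a div M = pB (snd a)"
  unfolding product_spine_def by auto

lemma product_spine_block_le:
  assumes "pG (fst a) < M" and "pG (fst b) < M"
    and "product_spine pG pB A M a < product_spine pG pB A M b"
  shows "pB (snd a) \<le> pB (snd b)"
  using div_le_mono[OF less_imp_le[OF assms(3)], of M] product_spine_div assms(1,2) by metis

lemma product_spine_less_same_block:
  assumes "snd a = snd b" and "pG (fst a) < M" and "pG (fst b) < M"
  shows "product_spine pG pB A M a < product_spine pG pB A M b \<longleftrightarrow>
    (if snd a \<in> A then pG (fst b) < pG (fst a) else pG (fst a) < pG (fst b))"
  using assms unfolding product_spine_def by auto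

lemma inj_on_product_spine:
  assumes "inj_on pG (verts G)" and "inj_on pB (verts B)" and "\<forall>u\<in>verts G. pG u < M"
  shows "inj_on (product_spine pG pB A M) (verts G \<times> verts B)"
proof (rule inj_onI)
  fix a b assume a: "a \<in> verts G \<times> verts B" and b: "b \<in> verts G \<times> verts B"
    and eq: "product_spine pG pB A M a = product_spine pG pB A M b"
  have "pB (snd a) = pB (snd b)"
    using eq product_spine_div a b assms(3) by (metis mem_Times_iff)
  then have snd_eq: "snd a = snd b" using assms(2) a b by (auto dest: inj_onD)
  moreover have "pG (fst a) < M" "pG (fst b) < M" using a b assms(3) by auto
  ultimately have "pG (fst a) = pG (fst b)"
    using eq unfolding product_spine_def by (auto split: if_splits)
  then have "fst a = fst b" using assms(1) a b by (auto dest: inj_onD)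
  with snd_eq show "a = b" by (simp add: prod_eq_iff)
qed

lemma product_page_B_fibre: "product_page k qG qB {(u, v1), (u, v2)} = k + qB {v1, v2}"
  unfolding product_page_def by simp

lemma product_page_G_fibre: "u1 \<noteq> u2 \<Longrightarrow> product_page k qG qB {(u1, v), (u2, v)} = qG {u1, u2}"
  unfolding product_page_def by simp

lemma verts_cart_prod: "verts (cart_prod G B) = verts G \<times> verts B"
  unfolding cart_prod_def verts_def by simp

lemma cart_prod_edge_cases:
  assumes "e \<in> edges (cart_prod G B)"
  obtains (G_fibre) u1 u2 v where "e = {(u1, v), (u2, v)}" "v \<in> verts B" "{u1, u2} \<in> edges G"
    | (B_fibre) u v1 v2 where "e = {(u, v1), (u, v2)}" "u \<in> verts G" "{v1, v2} \<in> edges B"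
proof -
  have "(\<exists>u v1 v2. e = {(u, v1), (u, v2)} \<and> u \<in> verts G \<and> {v1, v2} \<in> edges B) \<or>
        (\<exists>u1 u2 v. e = {(u1, v), (u2, v)} \<and> v \<in> verts B \<and> {u1, u2} \<in> edges G)"
    using assms unfolding cart_prod_def edges_def verts_def by auto
  with that show ?thesis by blast
qed

lemma G_fibres_compatible:
  assumes "graph G" and eG: "matching_book_embedding G k pG qG"
    and inj_pB: "inj_on pB (verts B)" and M: "\<forall>u\<in>verts G. pG u < M"
    and e: "{u1, u2} \<in> edges G" and f: "{x1, x2} \<in> edges G"
    and "v \<in> verts B" and "w \<in> verts B" and page: "qG {u1, u2} = qG {x1, x2}"
  shows "page_compatible (product_spine pG pB A M) {(u1, v), (u2, v)} {(x1, w), (x2, w)}"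
proof -
  let ?s = "product_spine pG pB A M" and ?e = "{(u1, v), (u2, v)}" and ?f = "{(x1, w), (x2, w)}"
  have in_G: "u1 \<in> verts G" "u2 \<in> verts G" "x1 \<in> verts G" "x2 \<in> verts G"
    using edge_endpoints[OF \<open>graph G\<close>] e f by blast+
  have compat: "page_compatible pG {u1, u2} {x1, x2}" "page_compatible pG {x1, x2} {u1, u2}"
    using eG e f page unfolding matching_book_embedding_iff by metis+
  have "\<not> crosses ?s ?e ?f"
  proof
    assume cross: "crosses ?s ?e ?f"
    obtain a b c where abc: "a \<in> ?e" "b \<in> ?e" "c \<in> ?f" and "?s a < ?s c" "?s c < ?s b"
      using crosses_between[OF cross] by blast
    moreover have "snd a = v" "snd b = v" "snd c = w" using abc by auto
    moreover have "pG (fst a) < M" "pG (fst b) < M" "pG (fst c) < M" using abc in_G M by auto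
    ultimately have "pB v \<le> pB w" "pB w \<le> pB v" using product_spine_block_le by metis+
    then have "w = v" using inj_pB \<open>v \<in> verts B\<close> \<open>w \<in> verts B\<close> by (auto dest: inj_onD)
    then have in_block: "snd a = v" "pG (fst a) < M" if "a \<in> ?e \<union> ?f" for a
      using that in_G M by auto
    have order: "?s a < ?s b \<longleftrightarrow>
        (if v \<in> A then pG (fst b) < pG (fst a) else pG (fst a) < pG (fst b))"
      if "a \<in> ?e \<union> ?f" "b \<in> ?e \<union> ?f" for a b
      using in_block[OF that(1)] in_block[OF that(2)] product_spine_less_same_block[of a b pG M pB A]
      by simp
    show False
    proof (cases "v \<in> A")
      case True
      then have "crosses pG (fst ` ?f) (fst ` ?e)"
        using crosses_image_antimono[OF cross, of pG fst] order by simp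
      with compat(2) show False by (simp add: page_compatible_def)
    next
      case False
      then have "crosses pG (fst ` ?e) (fst ` ?f)"
        using crosses_image_mono[OF cross, of pG fst] order by simp
      with compat(1) show False by (simp add: page_compatible_def)
    qed
  qed
  moreover have "?e \<inter> ?f = {}" if "?e \<noteq> ?f"
  proof (cases "v = w")
    case True
    with that have "{u1, u2} \<noteq> {x1, x2}" by auto
    with compat(1) have "{u1, u2} \<inter> {x1, x2} = {}" by (simp add: page_compatible_def)
    then show ?thesis by auto
  qed auto
  ultimately show ?thesis unfolding page_compatible_def by blast
qed

lemma product_spine_copies_nested:
  assumes "v1 \<noteq> v2" and sides: "v1 \<in> A \<longleftrightarrow> v2 \<notin> A" and inj_pB: "inj_on pB {v1, v2}"
    and "pG u < M" and "pG x < M"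
  shows "\<not> crosses (product_spine pG pB A M) {(u, v1), (u, v2)} {(x, v1), (x, v2)}"
proof
  let ?s = "product_spine pG pB A M"
  assume "crosses ?s {(u, v1), (u, v2)} {(x, v1), (x, v2)}"
  then obtain a b c d where e: "{(u, v1), (u, v2)} = {a, b}" and f: "{(x, v1), (x, v2)} = {c, d}"
    and ord: "?s a < ?s c" "?s c < ?s b" "?s b < ?s d" unfolding crosses_def by blast
  have fst_ab: "fst a = u" "fst b = u" and fst_cd: "fst c = x" "fst d = x"
    using e f by (auto simp: doubleton_eq_iff)
  have snd_ab: "{snd a, snd b} = {v1, v2}" and snd_cd: "{snd c, snd d} = {v1, v2}"
    using arg_cong[OF e, of "image snd"] arg_cong[OF f, of "image snd"] by auto
  have le: "pB (snd a) \<le> pB (snd c)" "pB (snd c) \<le> pB (snd b)" "pB (snd b) \<le> pB (snd d)"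
    using ord fst_ab fst_cd \<open>pG u < M\<close> \<open>pG x < M\<close> product_spine_block_le by metis+
  have "pB (snd a) \<noteq> pB (snd b)"
    using snd_ab \<open>v1 \<noteq> v2\<close> inj_pB by (auto simp: doubleton_eq_iff dest: inj_onD)
  then have same_blocks: "snd c = snd a" "snd d = snd b"
    using snd_ab snd_cd le by (auto simp: doubleton_eq_iff)
  have "snd a \<in> A \<longleftrightarrow> snd b \<notin> A" using snd_ab sides by (auto simp: doubleton_eq_iff)
  moreover have "if snd a \<in> A then pG x < pG u else pG u < pG x"
    using product_spine_less_same_block[of a c pG M] ord(1) same_blocks fst_ab fst_cd assms(4,5)
    by (simp split: if_splits)
  moreover have "if snd b \<in> A then pG x < pG u else pG u < pG x"
    using product_spine_less_same_block[of b d pG M] ord(3) same_blocks fst_ab fst_cd assms(4,5)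
    by (simp split: if_splits)
  ultimately show False by (cases "snd a \<in> A") simp_all
qed

lemma B_fibres_compatible:
  assumes "graph B" and eB: "matching_book_embedding B d pB qB"
    and M: "\<forall>u\<in>verts G. pG u < M" and A: "\<forall>e\<in>edges B. card (e \<inter> A) = 1"
    and e: "{v1, v2} \<in> edges B" and f: "{w1, w2} \<in> edges B"
    and "u \<in> verts G" and "x \<in> verts G" and page: "qB {v1, v2} = qB {w1, w2}"
  shows "page_compatible (product_spine pG pB A M) {(u, v1), (u, v2)} {(x, w1), (x, w2)}"
proof -
  let ?s = "product_spine pG pB A M" and ?e = "{(u, v1), (u, v2)}" and ?f = "{(x, w1), (x, w2)}"
  have inj_pB: "inj_on pB (verts B)" using eB by (simp add: matching_book_embedding_def)
  have ne: "v1 \<noteq> v2" "w1 \<noteq> w2" and in_B: "v1 \<in> verts B" "v2 \<in> verts B" "w1 \<in> verts B" "w2 \<in> verts B"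
    using edge_endpoints[OF \<open>graph B\<close>] e f by blast+
  have compat: "page_compatible pB {v1, v2} {w1, w2}"
    using eB e f page unfolding matching_book_embedding_iff by blast
  show ?thesis
  proof (cases "{v1, v2} = {w1, w2}")
    case same: True
    then have f_eq: "?f = {(x, v1), (x, v2)}" by (auto simp: doubleton_eq_iff)
    have "v1 \<in> A \<longleftrightarrow> v2 \<notin> A" using A e bipartite_edge_sides[OF ne(1)] by blast
    moreover have "inj_on pB {v1, v2}" using inj_pB in_B by (meson empty_subsetI inj_on_subset insert_subset)
    ultimately have "\<not> crosses ?s ?e ?f"
      unfolding f_eq using product_spine_copies_nested ne(1) M \<open>u \<in> verts G\<close> \<open>x \<in> verts G\<close> by metis
    moreover have "?e \<inter> ?f = {}" if "?e \<noteq> ?f" using that f_eq by auto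
    ultimately show ?thesis unfolding page_compatible_def by blast
  next
    case False
    with compat have disj: "{v1, v2} \<inter> {w1, w2} = {}" by (simp add: page_compatible_def)
    have "\<not> crosses ?s ?e ?f"
    proof
      assume cross: "crosses ?s ?e ?f"
      have "pB (snd a) < pB (snd b)" if "a \<in> ?e \<union> ?f" "b \<in> ?e \<union> ?f" "?s a < ?s b" for a b
      proof -
        have "snd a \<noteq> snd b" using that disj ne by auto
        then have "pB (snd a) \<noteq> pB (snd b)" using that in_B inj_pB by (auto dest: inj_onD)
        moreover have "pB (snd a) \<le> pB (snd b)"
          using that M \<open>u \<in> verts G\<close> \<open>x \<in> verts G\<close> product_spine_block_le[of pG a M b] by auto
        ultimately show ?thesis by simp
      qed
      then have "crosses pB (snd ` ?e) (snd ` ?f)" by (rule crosses_image_mono[OF cross])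
      with compat show False by (simp add: page_compatible_def)
    qed
    moreover have "?e \<inter> ?f = {}" using disj by auto
    ultimately show ?thesis unfolding page_compatible_def by blast
  qed
qed

lemma matching_book_embedding_cart_prod:
  assumes gG: "graph G" and gB: "graph B" and A: "\<forall>e\<in>edges B. card (e \<inter> A) = 1"
    and eG: "matching_book_embedding G k pG qG" and eB: "matching_book_embedding B d pB qB"
    and M: "\<forall>u\<in>verts G. pG u < M"
  shows "matching_book_embedding (cart_prod G B) (k + d)
           (product_spine pG pB A M) (product_page k qG qB)"
proof -
  let ?q = "product_page k qG qB"
  have inj: "inj_on pG (verts G)" "inj_on pB (verts B)"
    using eG eB by (simp_all add: matching_book_embedding_def)
  have page_G: "\<forall>e\<in>edges G. qG e < k" and page_B: "\<forall>e\<in>edges B. qB e < d"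
    using eG eB by (simp_all add: matching_book_embedding_def)
  have page_G_fibre: "?q {(u1, v), (u2, v)} = qG {u1, u2}" if "{u1, u2} \<in> edges G" for u1 u2 v
    by (rule product_page_G_fibre[OF edge_endpoints(1)[OF gG that]])
  have G_low: "?q {(u1, v), (u2, v)} < k" if "{u1, u2} \<in> edges G" for u1 u2 v
    using page_G_fibre[OF that] page_G that by simp
  have B_high: "k \<le> ?q {(u, v1), (u, v2)}" for u v1 v2
    by (simp add: product_page_B_fibre)
  have "?q e < k + d" if "e \<in> edges (cart_prod G B)" for e
    using that
  proof (cases rule: cart_prod_edge_cases)
    case (G_fibre u1 u2 v)
    then show ?thesis using G_low[of u1 u2 v] by simp
  next
    case (B_fibre u v1 v2)
    then show ?thesis using page_B by (simp add: product_page_B_fibre)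
  qed
  moreover have "page_compatible (product_spine pG pB A M) e f"
    if e: "e \<in> edges (cart_prod G B)" and f: "f \<in> edges (cart_prod G B)" and q: "?q e = ?q f" for e f
    using e
  proof (cases rule: cart_prod_edge_cases)
    case e_G: (G_fibre u1 u2 v)
    from f show ?thesis
    proof (cases rule: cart_prod_edge_cases)
      case f_G: (G_fibre x1 x2 w)
      then have "qG {u1, u2} = qG {x1, x2}" using q e_G page_G_fibre by metis
      then show ?thesis unfolding e_G(1) f_G(1)
        by (rule G_fibres_compatible[OF gG eG inj(2) M e_G(3) f_G(3) e_G(2) f_G(2)])
    next
      case (B_fibre x w1 w2)
      then show ?thesis using q e_G G_low[of u1 u2 v] B_high[of x w1 w2] by simp
    qed
  next
    case e_B: (B_fibre u v1 v2)
    from f show ?thesis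
    proof (cases rule: cart_prod_edge_cases)
      case (G_fibre x1 x2 w)
      then show ?thesis using q e_B G_low[of x1 x2 w] B_high[of u v1 v2] by simp
    next
      case f_B: (B_fibre x w1 w2)
      then have "qB {v1, v2} = qB {w1, w2}" using q e_B by (simp add: product_page_B_fibre)
      then show ?thesis unfolding e_B(1) f_B(1)
        by (rule B_fibres_compatible[OF gB eB M A e_B(3) f_B(3) e_B(2) f_B(2)])
    qed
  qed
  ultimately show ?thesis
    unfolding matching_book_embedding_iff verts_cart_prod
    using inj_on_product_spine[OF inj M] by simp
qed

theorem lemma2p5:
  fixes G :: "'a graph" and B :: "'b graph"
  assumes "graph G" and "graph B" and "bipartite B" and "dispersable B"
  shows "mbt (cart_prod G B) \<le> mbt G + max_degree B"
proof -
  obtain pG qG where eG: "matching_book_embedding G (mbt G) pG qG"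
    using mbt_attained[OF assms(1)] by blast
  obtain pB qB where eB: "matching_book_embedding B (mbt B) pB qB"
    using mbt_attained[OF assms(2)] by blast
  obtain A where A: "\<forall>e\<in>edges B. card (e \<inter> A) = 1"
    using assms(3) unfolding bipartite_def by blast
  define M where "M = Suc (Max (insert 0 (pG ` verts G)))"
  have "finite (verts G)" using assms(1) by (simp add: graph_def)
  then have "\<forall>u\<in>verts G. pG u < M" unfolding M_def by (simp add: le_imp_less_Suc)
  with assms(1,2) A eG eB have "mbt (cart_prod G B) \<le> mbt G + mbt B"
    by (blast intro: mbt_le matching_book_embedding_cart_prod)
  then show ?thesis using assms(4) by (simp add: dispersable_def)
qed

end
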